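(* If $n\geq 13$, then $t(K(n,4))=\frac{n}{4}-1$. Moreover, if $S$ is a vertex cut of $K(n,4)$ such that $\frac{|S|}{c(K(n,4)\setminus S)} = \frac{n}{4}-1$, then $S$ is the complement of a maximum independent set of $K(n,4)$.
   Context: The Kneser graph $K(n,k)$ has as vertices the $k$-element subsets of $[n]=\{1,\dots,n\}$, two vertices being adjacent iff they are disjoint. A vertex cut is a set $S$ of vertices whose removal disconnects the graph; $c(G\setminus S)$ is the number of connected components after deleting $S$; the toughness is $t(G)=\min_S |S|/c(G\setminus S)$ over vertex cuts $S$. *)

theory Defs
  imports Main "HOL-Library.Disjoint_Sets" Complex_Main
begin

text \<open>Simple graphs given by a vertex set V and a symmetric adjacency predicate E.\<close>

definition kneser_vertices :: "nat \<Rightarrow> nat \<Rightarrow> nat set set" where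
  "kneser_vertices n k = {A. A \<subseteq> {1..n} \<and> card A = k}"

definition kneser_adj :: "nat set \<Rightarrow> nat set \<Rightarrow> bool" where
  "kneser_adj A B \<longleftrightarrow> A \<inter> B = {}"

inductive reach_in :: "'a set \<Rightarrow> ('a \<Rightarrow> 'a \<Rightarrow> bool) \<Rightarrow> 'a \<Rightarrow> 'a \<Rightarrow> bool"
  for W E where
  refl: "x \<in> W \<Longrightarrow> reach_in W E x x"
| step: "reach_in W E x y \<Longrightarrow> z \<in> W \<Longrightarrow> E y z \<Longrightarrow> reach_in W E x z"

definition components_in :: "'a set \<Rightarrow> ('a \<Rightarrow> 'a \<Rightarrow> bool) \<Rightarrow> 'a set set" where
  "components_in W E = {{y. reach_in W E x y} | x. x \<in> W}"

definition num_components :: "'a set \<Rightarrow> ('a \<Rightarrow> 'a \<Rightarrow> bool) \<Rightarrow> nat" where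
  "num_components W E = card (components_in W E)"

definition vertex_cut :: "'a set \<Rightarrow> ('a \<Rightarrow> 'a \<Rightarrow> bool) \<Rightarrow> 'a set \<Rightarrow> bool" where
  "vertex_cut V E S \<longleftrightarrow> S \<subseteq> V \<and> num_components (V - S) E \<ge> 2"

definition toughness :: "'a set \<Rightarrow> ('a \<Rightarrow> 'a \<Rightarrow> bool) \<Rightarrow> real" where
  "toughness V E = (INF S \<in> {S. vertex_cut V E S}. real (card S) / real (num_components (V - S) E))"

definition independent_set :: "'a set \<Rightarrow> ('a \<Rightarrow> 'a \<Rightarrow> bool) \<Rightarrow> 'a set \<Rightarrow> bool" where
  "independent_set V E I \<longleftrightarrow> I \<subseteq> V \<and> (\<forall>x\<in>I. \<forall>y\<in>I. \<not> E x y)"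

definition max_independent_set :: "'a set \<Rightarrow> ('a \<Rightarrow> 'a \<Rightarrow> bool) \<Rightarrow> 'a set \<Rightarrow> bool" where
  "max_independent_set V E I \<longleftrightarrow> independent_set V E I \<and>
     (\<forall>J. independent_set V E J \<longrightarrow> card J \<le> card I)"

end

theory Submission
  imports Defs "HOL-Library.FuncSet"
begin

text \<open>Katona's cycle method shows that an intersecting family of 4-subsets of an \<open>m\<close>-set,
  \<open>m \<ge> 8\<close>, has at most \<open>4/m\<cdot>C(m,4) = C(m-1,3)\<close> members: a cyclic order contains at most
  four arcs of the family, and every 4-set is an arc of the same number of cyclic orders.

  Let \<open>S\<close> be a vertex cut of \<open>K(n,4)\<close> with \<open>c\<close> components. Each component \<open>K\<close> has at least
  \<open>C(n-4,4)\<close> neighbours in \<open>S\<close>: fix \<open>A \<in> K\<close> and a vertex \<open>C\<close> of another component; the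
  vertices disjoint from \<open>A\<close> lie in \<open>K \<union> S\<close>, and those in \<open>K\<close> are matched injectively (by a
  degree-balanced Hall argument) to neighbours of \<open>K\<close> in \<open>S\<close> that meet \<open>A\<close>. Conversely a vertex
  \<open>D \<in> S\<close> is adjacent to at most \<open>C(n-5,3)\<close> components, since representatives of those components
  form an intersecting family on \<open>[n] - D\<close>. Double counting gives \<open>|S|/c \<ge> (n-4)/4\<close>, which
  the complement of a star attains. In case of equality every \<open>D \<in> S\<close> attains Katona's bound;
  an edge inside \<open>V - S\<close> would produce a \<open>D\<close> for which the bound is strict, so \<open>V - S\<close> is
  independent, and the equality then says that it has \<open>C(n-1,3)\<close> elements.\<close>


section \<open>Connected components and toughness\<close>

lemma reach_in_mem: "reach_in W E x y \<Longrightarrow> x \<in> W \<and> y \<in> W"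
  by (induction rule: reach_in.induct) auto

lemma reach_in_trans:
  assumes "reach_in W E x y" and "reach_in W E y z"
  shows "reach_in W E x z"
  using assms(2,1) by induction (auto intro: reach_in.step)

lemma reach_in_edge: "x \<in> W \<Longrightarrow> y \<in> W \<Longrightarrow> E x y \<Longrightarrow> reach_in W E x y"
  by (meson reach_in.refl reach_in.step)

lemma reach_in_sym:
  assumes "symp E" and "reach_in W E x y"
  shows "reach_in W E y x"
  using assms(2)
proof (induction rule: reach_in.induct)
  case (refl x)
  then show ?case by (rule reach_in.refl)
next
  case (step x y z)
  then have "reach_in W E z y"
    using reach_in_mem reach_in_edge assms(1) by (metis sympD)
  then show ?case using step.IH by (rule reach_in_trans)
qed

definition component_of :: "'a set \<Rightarrow> ('a \<Rightarrow> 'a \<Rightarrow> bool) \<Rightarrow> 'a \<Rightarrow> 'a set" where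
  "component_of W E x = {y. reach_in W E x y}"

lemma components_in_eq_image: "components_in W E = component_of W E ` W"
  unfolding components_in_def component_of_def by auto

lemma component_of_in_components_in: "x \<in> W \<Longrightarrow> component_of W E x \<in> components_in W E"
  by (simp add: components_in_eq_image)

lemma in_component_of_self: "x \<in> W \<Longrightarrow> x \<in> component_of W E x"
  unfolding component_of_def by (simp add: reach_in.refl)

lemma components_in_subset: "K \<in> components_in W E \<Longrightarrow> K \<subseteq> W"
  unfolding components_in_eq_image component_of_def using reach_in_mem by fastforce

lemma components_in_nonempty: "K \<in> components_in W E \<Longrightarrow> K \<noteq> {}"
  unfolding components_in_eq_image using in_component_of_self by fastforce

lemma finite_components_in: "finite W \<Longrightarrow> finite (components_in W E)"
  by (simp add: components_in_eq_image)

lemma components_in_eq_component_of: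
  assumes "symp E" and "K \<in> components_in W E" and "y \<in> K"
  shows "K = component_of W E y"
proof -
  obtain x where K: "K = component_of W E x" using assms(2) unfolding components_in_eq_image by auto
  then have "reach_in W E x y" "reach_in W E y x"
    using assms(3) reach_in_sym[OF assms(1)] unfolding component_of_def by auto
  then show ?thesis unfolding K component_of_def by (auto intro: reach_in_trans)
qed

lemma components_in_disjoint:
  assumes "symp E" and "K1 \<in> components_in W E" and "K2 \<in> components_in W E"
    and "x \<in> K1" and "x \<in> K2"
  shows "K1 = K2"
  using assms components_in_eq_component_of by metis

lemma components_in_edge_closed:
  assumes "symp E" and "K \<in> components_in W E" and "x \<in> K" and "y \<in> W" and "E x y"
  shows "y \<in> K"
proof -
  have "x \<in> W" using assms(2,3) components_in_subset by blast
  then have "reach_in W E x y" using assms(4,5) by (rule reach_in_edge)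
  then show ?thesis using components_in_eq_component_of[OF assms(1-3)]
    unfolding component_of_def by simp
qed

lemma components_in_no_edge:
  assumes "symp E" and "K1 \<in> components_in W E" and "K2 \<in> components_in W E"
    and "x \<in> K1" and "y \<in> K2" and "K1 \<noteq> K2"
  shows "\<not> E x y"
  using assms components_in_edge_closed components_in_disjoint components_in_subset
  by (metis subsetD)

lemma components_in_edgeless:
  assumes "\<And>x y. x \<in> W \<Longrightarrow> y \<in> W \<Longrightarrow> \<not> E x y"
  shows "components_in W E = (\<lambda>x. {x}) ` W"
proof -
  have "reach_in W E x y \<Longrightarrow> y = x" for x y
    by (induction rule: reach_in.induct) (use assms reach_in_mem in metis)+
  then have "component_of W E x = {x}" if "x \<in> W" for x
    using that in_component_of_self unfolding component_of_def by fastforce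
  then show ?thesis unfolding components_in_eq_image by simp
qed

lemma num_components_edgeless:
  assumes "\<And>x y. x \<in> W \<Longrightarrow> y \<in> W \<Longrightarrow> \<not> E x y"
  shows "num_components W E = card W"
  using components_in_edgeless[of W E] assms
  by (simp add: num_components_def card_image inj_on_def)

definition components_adjacent_to :: "'a set \<Rightarrow> ('a \<Rightarrow> 'a \<Rightarrow> bool) \<Rightarrow> 'a \<Rightarrow> 'a set set" where
  "components_adjacent_to W E v = {K \<in> components_in W E. \<exists>x\<in>K. E x v}"

lemma sum_card_components_adjacent_to:
  assumes "finite S" and "finite W"
  shows "(\<Sum>v\<in>S. card (components_adjacent_to W E v))
    = (\<Sum>K\<in>components_in W E. card {v\<in>S. \<exists>x\<in>K. E x v})"
  unfolding components_adjacent_to_def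
  using sum.swap_restrict[OF assms(1) finite_components_in[OF assms(2)], of "\<lambda>_ _. 1::nat"]
  by simp

lemma common_neighbour_notin_components:
  assumes "symp E" and "K1 \<in> components_in W E" and "K2 \<in> components_in W E" and "K1 \<noteq> K2"
    and "x \<in> K1" and "y \<in> K2" and "E x z" and "E y z"
  shows "z \<notin> W"
  using assms components_in_edge_closed components_in_disjoint by metis

lemma obtain_other_component:
  assumes "2 \<le> num_components W E" and "K \<in> components_in W E"
  obtains K' where "K' \<in> components_in W E" and "K' \<noteq> K"
proof -
  have "\<not> components_in W E \<subseteq> {K}"
  proof
    assume "components_in W E \<subseteq> {K}"
    then have "num_components W E \<le> 1" unfolding num_components_def using card_mono[of "{K}"] by fastforce
    then show False using assms(1) by simp
  qed
  then show thesis using that by blast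
qed

lemma toughness_eqI:
  assumes lower: "\<And>S. vertex_cut V E S \<Longrightarrow> t \<le> real (card S) / real (num_components (V - S) E)"
    and cut: "vertex_cut V E S\<^sub>0"
    and attained: "real (card S\<^sub>0) / real (num_components (V - S\<^sub>0) E) = t"
  shows "toughness V E = t"
proof -
  let ?f = "\<lambda>S. real (card S) / real (num_components (V - S) E)"
  have "bdd_below (?f ` {S. vertex_cut V E S})" by (rule bdd_belowI[of _ t]) (use lower in auto)
  then have "(INF S\<in>{S. vertex_cut V E S}. ?f S) \<le> ?f S\<^sub>0"
    by (rule cINF_lower) (use cut in simp)
  moreover have "t \<le> (INF S\<in>{S. vertex_cut V E S}. ?f S)"
    by (rule cINF_greatest) (use lower cut in auto)
  ultimately show ?thesis unfolding toughness_def using attained by linarith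
qed


section \<open>Katona's cycle method for intersecting families of 4-sets\<close>

definition arc :: "nat \<Rightarrow> nat \<Rightarrow> nat set" where
  "arc m i = (\<lambda>r. (i + r) mod m) ` {..<4}"

text \<open>For \<open>i, j < m\<close>: the cyclic distance of \<open>i\<close> and \<open>j\<close> modulo \<open>m\<close> is at most 3.\<close>
definition arcs_overlap :: "nat \<Rightarrow> nat \<Rightarrow> nat \<Rightarrow> bool" where
  "arcs_overlap m i j \<longleftrightarrow>
     (i \<le> j \<and> j \<le> i + 3) \<or> (j \<le> i \<and> i \<le> j + 3) \<or> j + m \<le> i + 3 \<or> i + m \<le> j + 3"

lemma mod_less_double: "(x::nat) < 2 * m \<Longrightarrow> x mod m = (if x < m then x else x - m)"
  by (simp add: mod_if)

lemma mem_arc: "x \<in> arc m i \<longleftrightarrow> (\<exists>r<4. x = (i + r) mod m)"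
  unfolding arc_def by auto

lemma arc_subset: "0 < m \<Longrightarrow> arc m i \<subseteq> {..<m}"
  unfolding arc_def by auto

lemma arc_0:
  assumes "4 \<le> m"
  shows "arc m 0 = {..<4}"
proof -
  have "(\<lambda>r. (0 + r) mod m) ` {..<4} = (\<lambda>r. r) ` {..<4}"
    using assms by (intro image_cong) auto
  then show ?thesis unfolding arc_def by simp
qed

lemma card_arc:
  assumes "4 \<le> m" and "i < m"
  shows "card (arc m i) = 4"
proof -
  have "inj_on (\<lambda>r. (i + r) mod m) {..<4}"
  proof
    fix r s assume "r \<in> {..<(4::nat)}" "s \<in> {..<(4::nat)}" "(i + r) mod m = (i + s) mod m"
    moreover from this have "i + r < 2 * m" "i + s < 2 * m" using assms by auto
    ultimately show "r = s"
      using mod_less_double[of "i + r" m] mod_less_double[of "i + s" m] assms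
      by (auto split: if_splits)
  qed
  then show ?thesis unfolding arc_def by (simp add: card_image)
qed

lemma arc_inter_iff_overlap:
  assumes "4 \<le> m" and "i < m" and "j < m"
  shows "arc m i \<inter> arc m j \<noteq> {} \<longleftrightarrow> arcs_overlap m i j"
proof
  assume "arc m i \<inter> arc m j \<noteq> {}"
  then obtain x where "x \<in> arc m i" "x \<in> arc m j" by blast
  then obtain r s where "r < 4" "s < 4" and eq: "(i + r) mod m = (j + s) mod m"
    unfolding mem_arc by metis
  moreover from this have "i + r < 2 * m" "j + s < 2 * m" using assms by auto
  ultimately show "arcs_overlap m i j"
    using mod_less_double[of "i + r" m] mod_less_double[of "j + s" m]
    unfolding arcs_overlap_def by (auto split: if_splits)
next
  have "(0::nat) < 4" by simp
  assume "arcs_overlap m i j"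
  then have "\<exists>r<4. \<exists>s<4. (i + r) mod m = (j + s) mod m"
    unfolding arcs_overlap_def
  proof (elim disjE)
    assume "i \<le> j \<and> j \<le> i + 3"
    then have "j - i < 4" "(i + (j - i)) mod m = (j + 0) mod m" by auto
    then show ?thesis using \<open>(0::nat) < 4\<close> by blast
  next
    assume "j \<le> i \<and> i \<le> j + 3"
    then have "i - j < 4" "(i + 0) mod m = (j + (i - j)) mod m" by auto
    then show ?thesis using \<open>(0::nat) < 4\<close> by blast
  next
    assume "j + m \<le> i + 3"
    then have "j + m - i < 4" "(i + (j + m - i)) mod m = (j + 0) mod m" using assms by auto
    then show ?thesis using \<open>(0::nat) < 4\<close> by blast
  next
    assume "i + m \<le> j + 3"
    then have "i + m - j < 4" "(i + 0) mod m = (j + (i + m - j)) mod m" using assms by auto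
    then show ?thesis using \<open>(0::nat) < 4\<close> by blast
  qed
  then obtain r s where "r < 4" "s < 4" "(i + r) mod m = (j + s) mod m" by blast
  then have "(i + r) mod m \<in> arc m i" "(i + r) mod m \<in> arc m j" unfolding mem_arc by auto
  then show "arc m i \<inter> arc m j \<noteq> {}" by blast
qed

text \<open>Katona's lemma. Since \<open>m \<ge> 8\<close>, the offsets of the members from a fixed member \<open>i\<^sub>0\<close>,
  folded into \<open>{..<4}\<close>, are pairwise distinct.\<close>
lemma card_pairwise_overlapping_le_4:
  assumes m: "8 \<le> m" and J: "J \<subseteq> {..<m}"
    and overlap: "\<And>i j. i \<in> J \<Longrightarrow> j \<in> J \<Longrightarrow> arcs_overlap m i j"
  shows "card J \<le> 4"
proof (cases "J = {}")
  case False
  then obtain i0 where i0: "i0 \<in> J" by blast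
  define f where "f j = (let d = (if i0 \<le> j then j - i0 else j + m - i0) in
    if d \<le> 3 then d else d + 4 - m)" for j
  have i0m: "i0 < m" using i0 J by auto
  have "f j \<in> {..<4}" if "j \<in> J" for j
    using overlap[OF i0 that] that J i0m unfolding f_def arcs_overlap_def Let_def by auto
  moreover have "inj_on f J"
  proof
    fix j k assume j: "j \<in> J" and k: "k \<in> J" and "f j = f k"
    moreover have "arcs_overlap m i0 j" "arcs_overlap m i0 k" "arcs_overlap m j k"
      using overlap i0 j k by auto
    moreover have "j < m" "k < m" using j k J by auto
    ultimately show "j = k"
      using i0m m unfolding f_def arcs_overlap_def Let_def by (auto split: if_splits)
  qed
  ultimately have "card J \<le> card {..<(4::nat)}"
    using card_inj_on_le[of f J "{..<4}"] by blast
  then show ?thesis by simp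
qed simp

definition cyclic_orders :: "'a set \<Rightarrow> nat \<Rightarrow> (nat \<Rightarrow> 'a) set" where
  "cyclic_orders Y m = {\<sigma> \<in> {..<m} \<rightarrow>\<^sub>E Y. bij_betw \<sigma> {..<m} Y}"

definition num_arcs_in :: "'a set set \<Rightarrow> nat \<Rightarrow> (nat \<Rightarrow> 'a) \<Rightarrow> nat" where
  "num_arcs_in F m \<sigma> = card {i \<in> {..<m}. \<sigma> ` arc m i \<in> F}"

definition arc_placements :: "'a set \<Rightarrow> nat \<Rightarrow> 'a set \<Rightarrow> ((nat \<Rightarrow> 'a) \<times> nat) set" where
  "arc_placements Y m G = {(\<sigma>, i). \<sigma> \<in> cyclic_orders Y m \<and> i < m \<and> \<sigma> ` arc m i = G}"

lemma finite_cyclic_orders: "finite Y \<Longrightarrow> finite (cyclic_orders Y m)"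
  unfolding cyclic_orders_def by (rule finite_subset[of _ "{..<m} \<rightarrow>\<^sub>E Y"]) (auto intro: finite_PiE)

lemma finite_arc_placements: "finite Y \<Longrightarrow> finite (arc_placements Y m G)"
  by (rule finite_subset[of _ "cyclic_orders Y m \<times> {..<m}"])
    (auto simp: arc_placements_def finite_cyclic_orders)

lemma cyclic_orders_bij_betw: "\<sigma> \<in> cyclic_orders Y m \<Longrightarrow> bij_betw \<sigma> {..<m} Y"
  unfolding cyclic_orders_def by simp

lemma cyclic_orders_of_bij_betw:
  "bij_betw \<sigma> {..<m} Y \<Longrightarrow> restrict \<sigma> {..<m} \<in> cyclic_orders Y m"
  unfolding cyclic_orders_def using bij_betwE[of \<sigma> "{..<m}" Y]
  by (auto simp: bij_betw_cong[of "{..<m}" "restrict \<sigma> {..<m}" \<sigma>])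

lemma cyclic_orders_of_list:
  "distinct xs \<Longrightarrow> set xs = Y \<Longrightarrow> length xs = m \<Longrightarrow> restrict ((!) xs) {..<m} \<in> cyclic_orders Y m"
  by (rule cyclic_orders_of_bij_betw) (simp add: bij_betw_nth)

lemma cyclic_orders_nonempty:
  assumes "finite Y" and "card Y = m"
  shows "cyclic_orders Y m \<noteq> {}"
proof -
  obtain xs where xs: "set xs = Y" "distinct xs" using finite_distinct_list[OF assms(1)] by blast
  moreover from this have "length xs = m" using assms(2) distinct_card by fastforce
  ultimately show ?thesis using cyclic_orders_of_list by blast
qed

lemma image_arc_in_cyclic_order:
  assumes "\<sigma> \<in> cyclic_orders Y m" and "4 \<le> m" and "i < m"
  shows "\<sigma> ` arc m i \<subseteq> Y" and "card (\<sigma> ` arc m i) = 4"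
proof -
  have "arc m i \<subseteq> {..<m}" using arc_subset assms(2) by simp
  moreover note bij = cyclic_orders_bij_betw[OF assms(1)]
  ultimately show "\<sigma> ` arc m i \<subseteq> Y" using bij_betwE by blast
  have "inj_on \<sigma> (arc m i)"
    using bij \<open>arc m i \<subseteq> {..<m}\<close> by (auto simp: bij_betw_def intro: inj_on_subset)
  then show "card (\<sigma> ` arc m i) = 4" using card_arc assms(2,3) by (simp add: card_image)
qed

lemma arcs_overlap_if_images_meet:
  assumes "\<sigma> \<in> cyclic_orders Y m" and "4 \<le> m" and "i < m" and "j < m"
    and "\<sigma> ` arc m i \<inter> \<sigma> ` arc m j \<noteq> {}"
  shows "arcs_overlap m i j"
proof -
  have "inj_on \<sigma> {..<m}" using cyclic_orders_bij_betw[OF assms(1)] by (simp add: bij_betw_def)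
  then have "\<sigma> ` arc m i \<inter> \<sigma> ` arc m j = \<sigma> ` (arc m i \<inter> arc m j)"
    using arc_subset[of m] assms(2) by (intro inj_on_image_Int[symmetric]) auto
  then show ?thesis using assms arc_inter_iff_overlap by auto
qed

lemma num_arcs_in_le_4:
  assumes "8 \<le> m" and "\<sigma> \<in> cyclic_orders Y m"
    and "\<And>A B. A \<in> F \<Longrightarrow> B \<in> F \<Longrightarrow> A \<inter> B \<noteq> {}"
  shows "num_arcs_in F m \<sigma> \<le> 4"
  unfolding num_arcs_in_def
proof (rule card_pairwise_overlapping_le_4[OF assms(1)])
  fix i j assume "i \<in> {i \<in> {..<m}. \<sigma> ` arc m i \<in> F}" "j \<in> {i \<in> {..<m}. \<sigma> ` arc m i \<in> F}"
  then show "arcs_overlap m i j"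
    by (intro arcs_overlap_if_images_meet[OF assms(2)]) (use assms(1,3) in auto)
qed auto

lemma ex_permutation_image_eq:
  assumes "finite Y" and "G \<subseteq> Y" and "G' \<subseteq> Y" and "card G = card G'"
  obtains \<rho> where "bij_betw \<rho> Y Y" and "\<rho> ` G = G'"
proof -
  have fin: "finite G" "finite G'" using assms finite_subset by auto
  obtain g where g: "bij_betw g G G'" using finite_same_card_bij[OF fin assms(4)] by blast
  have "card (Y - G) = card (Y - G')" using assms fin by (simp add: card_Diff_subset)
  then obtain h where h: "bij_betw h (Y - G) (Y - G')"
    using finite_same_card_bij[of "Y - G" "Y - G'"] assms(1) by blast
  define \<rho> where "\<rho> x = (if x \<in> G then g x else h x)" for x
  have "bij_betw \<rho> G G'" using g by (rule bij_betw_cong[THEN iffD1, rotated]) (simp add: \<rho>_def)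
  moreover have "bij_betw \<rho> (Y - G) (Y - G')"
    using h by (rule bij_betw_cong[THEN iffD1, rotated]) (simp add: \<rho>_def)
  ultimately have "bij_betw \<rho> (G \<union> (Y - G)) (G' \<union> (Y - G'))"
    by (rule bij_betw_combine) auto
  moreover have "G \<union> (Y - G) = Y" "G' \<union> (Y - G') = Y" using assms by auto
  ultimately show thesis using that \<open>bij_betw \<rho> G G'\<close> bij_betw_imp_surj_on by metis
qed

text \<open>Composing with a permutation of \<open>Y\<close> carrying \<open>G\<close> to \<open>G'\<close> maps placements of \<open>G\<close>
  injectively to placements of \<open>G'\<close>.\<close>
lemma card_arc_placements_le:
  assumes "finite Y" and "0 < m" and "G \<subseteq> Y" and "G' \<subseteq> Y" and "card G = card G'"
  shows "card (arc_placements Y m G) \<le> card (arc_placements Y m G')"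
proof -
  obtain \<rho> where \<rho>: "bij_betw \<rho> Y Y" "\<rho> ` G = G'"
    using ex_permutation_image_eq[OF assms(1,3-5)] by blast
  define \<Phi> where "\<Phi> p = (restrict (\<rho> \<circ> fst p) {..<m}, snd p)" for p :: "(nat \<Rightarrow> 'a) \<times> nat"
  have "inj_on \<Phi> (arc_placements Y m G)"
  proof
    fix p q assume "p \<in> arc_placements Y m G" "q \<in> arc_placements Y m G" "\<Phi> p = \<Phi> q"
    then obtain \<sigma> \<tau> i where pq: "p = (\<sigma>, i)" "q = (\<tau>, i)"
      and \<sigma>: "\<sigma> \<in> cyclic_orders Y m" and \<tau>: "\<tau> \<in> cyclic_orders Y m"
      and eq: "restrict (\<rho> \<circ> \<sigma>) {..<m} = restrict (\<rho> \<circ> \<tau>) {..<m}"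
      unfolding arc_placements_def \<Phi>_def by auto
    have "\<sigma> k = \<tau> k" for k
    proof (cases "k < m")
      case True
      then have "\<rho> (\<sigma> k) = \<rho> (\<tau> k)" "\<sigma> k \<in> Y" "\<tau> k \<in> Y"
        using fun_cong[OF eq, of k] \<sigma> \<tau> unfolding cyclic_orders_def by auto
      then show ?thesis using \<rho>(1) unfolding bij_betw_def by (auto dest: inj_onD)
    next
      case False
      then show ?thesis using \<sigma> \<tau> unfolding cyclic_orders_def PiE_def extensional_def by auto
    qed
    then show "p = q" using pq by auto
  qed
  moreover have "\<Phi> ` arc_placements Y m G \<subseteq> arc_placements Y m G'"
  proof
    fix x assume "x \<in> \<Phi> ` arc_placements Y m G"
    then obtain \<sigma> i where \<sigma>: "\<sigma> \<in> cyclic_orders Y m" and i: "i < m" and a: "\<sigma> ` arc m i = G"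
      and x: "x = \<Phi> (\<sigma>, i)" unfolding arc_placements_def by auto
    have "restrict (\<rho> \<circ> \<sigma>) {..<m} \<in> cyclic_orders Y m"
      using bij_betw_trans[OF cyclic_orders_bij_betw[OF \<sigma>] \<rho>(1)] by (rule cyclic_orders_of_bij_betw)
    moreover have "restrict (\<rho> \<circ> \<sigma>) {..<m} ` arc m i = G'"
      using arc_subset[OF assms(2), of i] a \<rho>(2) by (auto simp: image_iff)
    ultimately show "x \<in> arc_placements Y m G'" using x i unfolding arc_placements_def \<Phi>_def by simp
  qed
  ultimately show ?thesis using card_inj_on_le finite_arc_placements[OF assms(1)] by blast
qed

lemma sum_num_arcs_in:
  assumes "finite Y" and "F \<subseteq> Pow Y"
  shows "(\<Sum>\<sigma>\<in>cyclic_orders Y m. num_arcs_in F m \<sigma>) = (\<Sum>G\<in>F. card (arc_placements Y m G))"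
proof -
  have "finite F" using finite_subset[OF assms(2)] assms(1) by simp
  have "(\<Sum>\<sigma>\<in>cyclic_orders Y m. num_arcs_in F m \<sigma>)
      = card (SIGMA \<sigma>:cyclic_orders Y m. {i \<in> {..<m}. \<sigma> ` arc m i \<in> F})"
    unfolding num_arcs_in_def
    by (rule card_SigmaI[symmetric]) (auto simp: finite_cyclic_orders[OF assms(1)])
  also have "(SIGMA \<sigma>:cyclic_orders Y m. {i \<in> {..<m}. \<sigma> ` arc m i \<in> F})
      = (\<Union>G\<in>F. arc_placements Y m G)"
    unfolding arc_placements_def by auto
  also have "card \<dots> = (\<Sum>G\<in>F. card (arc_placements Y m G))"
  proof (rule card_UN_disjoint[OF \<open>finite F\<close>])
    show "\<forall>G\<in>F. finite (arc_placements Y m G)" using finite_arc_placements[OF assms(1)] by blast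
    show "\<forall>G\<in>F. \<forall>G'\<in>F. G \<noteq> G' \<longrightarrow> arc_placements Y m G \<inter> arc_placements Y m G' = {}"
      unfolding arc_placements_def by auto
  qed
  finally show ?thesis .
qed

text \<open>Every 4-subset of \<open>Y\<close> has the same number of arc placements; counting all pairs
  (cyclic order, arc) in two ways determines that number.\<close>
lemma katona_double_count:
  assumes fY: "finite Y" and cY: "card Y = m" and m: "4 \<le> m"
    and F: "F \<subseteq> {A. A \<subseteq> Y \<and> card A = 4}"
  shows "(m choose 4) * (\<Sum>\<sigma>\<in>cyclic_orders Y m. num_arcs_in F m \<sigma>)
    = card F * m * card (cyclic_orders Y m)"
proof -
  define All where "All = {A. A \<subseteq> Y \<and> card A = 4}"
  obtain G0 where G0: "G0 \<in> All" using obtain_subset_with_card_n[of 4 Y] cY m All_def by auto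
  define N where "N = card (arc_placements Y m G0)"
  have N: "card (arc_placements Y m G) = N" if "G \<in> All" for G
    using card_arc_placements_le[OF fY, of m G G0] card_arc_placements_le[OF fY, of m G0 G]
      that G0 m unfolding N_def All_def by fastforce
  have sum: "(\<Sum>\<sigma>\<in>cyclic_orders Y m. num_arcs_in H m \<sigma>) = card H * N" if "H \<subseteq> All" for H
    using sum_num_arcs_in[OF fY, of H] that N All_def by (auto simp: subset_iff)
  have "num_arcs_in All m \<sigma> = m" if "\<sigma> \<in> cyclic_orders Y m" for \<sigma>
  proof -
    have "{i \<in> {..<m}. \<sigma> ` arc m i \<in> All} = {..<m}"
      using image_arc_in_cyclic_order[OF that m] All_def by auto
    then show ?thesis unfolding num_arcs_in_def by simp
  qed
  then have "card (cyclic_orders Y m) * m = (m choose 4) * N"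
    using sum[of All] n_subsets[OF fY, of 4] cY All_def by simp
  then show ?thesis using sum F All_def by (simp add: algebra_simps)
qed

theorem intersecting_family_card_le:
  assumes "finite Y" and "card Y = m" and "8 \<le> m"
    and F: "F \<subseteq> {A. A \<subseteq> Y \<and> card A = 4}"
    and "\<And>A B. A \<in> F \<Longrightarrow> B \<in> F \<Longrightarrow> A \<inter> B \<noteq> {}"
  shows "card F * m \<le> 4 * (m choose 4)"
proof -
  let ?O = "cyclic_orders Y m"
  have sum_le: "(\<Sum>\<sigma>\<in>?O. num_arcs_in F m \<sigma>) \<le> (\<Sum>\<sigma>\<in>?O. 4)"
    by (intro sum_mono num_arcs_in_le_4) (use assms in auto)
  have "card F * m * card ?O = (m choose 4) * (\<Sum>\<sigma>\<in>?O. num_arcs_in F m \<sigma>)"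
    using katona_double_count[OF assms(1,2) _ F] assms(3) by simp
  also have "\<dots> \<le> (m choose 4) * (4 * card ?O)" using sum_le by simp
  also have "\<dots> = 4 * (m choose 4) * card ?O" by simp
  finally have "card F * m * card ?O \<le> 4 * (m choose 4) * card ?O" .
  moreover have "0 < card ?O"
    using cyclic_orders_nonempty finite_cyclic_orders assms(1,2) card_gt_0_iff by blast
  ultimately show ?thesis by simp
qed

lemma intersecting_family_card_less_of_cyclic_order:
  assumes "finite Y" and "card Y = m" and "8 \<le> m"
    and F: "F \<subseteq> {A. A \<subseteq> Y \<and> card A = 4}"
    and "\<And>A B. A \<in> F \<Longrightarrow> B \<in> F \<Longrightarrow> A \<inter> B \<noteq> {}"
    and \<sigma>: "\<sigma> \<in> cyclic_orders Y m" and "num_arcs_in F m \<sigma> \<le> 3"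
  shows "card F * m < 4 * (m choose 4)"
proof -
  let ?O = "cyclic_orders Y m"
  have sum_less: "(\<Sum>\<sigma>\<in>?O. num_arcs_in F m \<sigma>) < (\<Sum>\<sigma>\<in>?O. 4)"
  proof (rule sum_strict_mono_ex1)
    show "finite ?O" using finite_cyclic_orders assms(1) .
    show "\<forall>\<tau>\<in>?O. num_arcs_in F m \<tau> \<le> 4" using num_arcs_in_le_4 assms(3,5) by blast
    show "\<exists>\<tau>\<in>?O. num_arcs_in F m \<tau> < 4" using assms(6,7) by force
  qed
  have "card F * m * card ?O = (m choose 4) * (\<Sum>\<sigma>\<in>?O. num_arcs_in F m \<sigma>)"
    using katona_double_count[OF assms(1,2) _ F] assms(3) by simp
  also have "\<dots> < (m choose 4) * (4 * card ?O)"
    using sum_less assms(2,3) by simp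
  also have "\<dots> = 4 * (m choose 4) * card ?O" by simp
  finally have "card F * m * card ?O < 4 * (m choose 4) * card ?O" .
  then show ?thesis by simp
qed

lemma distinct_append_nth_in_prefix:
  assumes "distinct (xs @ ys)" and "k < length (xs @ ys)" and "(xs @ ys) ! k \<in> set xs"
  shows "k < length xs"
proof (rule ccontr)
  assume "\<not> k < length xs"
  then have "(xs @ ys) ! k \<in> set ys" using assms(2) by (simp add: nth_append)
  then show False using assms(1,3) by auto
qed

lemma distinct_append_nth_in_suffix:
  assumes "distinct (xs @ ys)" and "k < length (xs @ ys)" and "(xs @ ys) ! k \<in> set ys"
  shows "length xs \<le> k"
proof (rule ccontr)
  assume "\<not> length xs \<le> k"
  then have "(xs @ ys) ! k \<in> set xs" by (simp add: nth_append)
  then show False using assms(1,3) by auto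
qed

text \<open>The cyclic order \<open>A, r, Q, \<dots>\<close> for some \<open>r \<notin> A \<union> Q\<close>.\<close>
lemma ex_cyclic_order_blocks:
  assumes fY: "finite Y" and cY: "card Y = m" and m: "8 \<le> m"
    and AY: "A \<subseteq> Y" and cA: "card A = 4" and QY: "Q \<subseteq> Y" and QA: "Q \<inter> A = {}"
    and cQ: "card Q \<le> 3"
  obtains \<sigma> where "\<sigma> \<in> cyclic_orders Y m"
    and "\<And>k. k < m \<Longrightarrow> \<sigma> k \<in> A \<Longrightarrow> k < 4"
    and "\<And>k. k < m \<Longrightarrow> \<sigma> k \<in> Q \<Longrightarrow> 5 \<le> k \<and> k \<le> 7"
proof -
  have fA: "finite A" and fQ: "finite Q" using fY AY QY finite_subset by auto
  have "card (A \<union> Q) < card Y"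
    using card_Un_disjoint[OF fA fQ] QA cA cQ cY m by (simp add: Int_commute)
  then have "\<not> Y \<subseteq> A \<union> Q" using card_mono[of "A \<union> Q" Y] fA fQ by auto
  then obtain r where r: "r \<in> Y" "r \<notin> A" "r \<notin> Q" by blast
  obtain as where as: "set as = A" "distinct as" using finite_distinct_list[OF fA] by blast
  obtain qs where qs: "set qs = Q" "distinct qs" using finite_distinct_list[OF fQ] by blast
  obtain rs where rs: "set rs = Y - A - Q - {r}" "distinct rs"
    using finite_distinct_list[of "Y - A - Q - {r}"] fY by blast
  define L where "L = as @ r # qs @ rs"
  have dL: "distinct L" unfolding L_def using as qs rs r QA by auto
  have sL: "set L = Y" unfolding L_def using as qs rs r AY QY by auto
  have lL: "length L = m" using distinct_card[OF dL] sL cY by simp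
  have las: "length as = 4" and lqs: "length qs = card Q"
    using distinct_card[OF as(2)] distinct_card[OF qs(2)] as qs cA by auto
  define \<sigma> where "\<sigma> = restrict ((!) L) {..<m}"
  show thesis
  proof
    show "\<sigma> \<in> cyclic_orders Y m" unfolding \<sigma>_def using cyclic_orders_of_list dL sL lL .
  next
    fix k assume "k < m" "\<sigma> k \<in> A"
    then show "k < 4"
      using distinct_append_nth_in_prefix[of as "r # qs @ rs" k] dL lL las as
      unfolding \<sigma>_def L_def by simp
  next
    fix k assume k: "k < m" "\<sigma> k \<in> Q"
    then have "L ! k \<in> Q" unfolding \<sigma>_def by simp
    then have "length (as @ [r]) \<le> k" "k < length (as @ r # qs)"
      using distinct_append_nth_in_suffix[of "as @ [r]" "qs @ rs" k]
        distinct_append_nth_in_prefix[of "as @ r # qs" rs k] dL lL k qs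
      unfolding L_def by auto
    then show "5 \<le> k \<and> k \<le> 7" using las lqs cQ by simp
  qed
qed

text \<open>With \<open>m \<ge> 9\<close>, the positions \<open>2, \<dots>, 7\<close> that overlap the arc at 0 are \<open>2, 3, 6, 7\<close>,
  and the pairwise overlapping subsets of \<open>{0, 2, 3, 6, 7}\<close> have at most three elements.\<close>
lemma card_overlapping_positions_le_3:
  assumes m: "9 \<le> m"
    and cand: "\<And>i. i \<in> J \<Longrightarrow> i = 0 \<or> (arcs_overlap m 0 i \<and> 2 \<le> i \<and> i \<le> 7)"
    and overlap: "\<And>i j. i \<in> J \<Longrightarrow> j \<in> J \<Longrightarrow> arcs_overlap m i j"
  shows "card J \<le> 3"
proof -
  have "J \<subseteq> {0, 2, 3} \<or> J \<subseteq> {0, 3, 6} \<or> J \<subseteq> {0, 6, 7}"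
  proof (cases "2 \<in> J")
    case True
    have "j \<in> {0, 2, 3}" if "j \<in> J" for j
      using cand[OF that] overlap[OF True that] m unfolding arcs_overlap_def by auto
    then show ?thesis by blast
  next
    case no2: False
    show ?thesis
    proof (cases "3 \<in> J")
      case True
      have "j \<in> {0, 3, 6}" if "j \<in> J" for j
      proof -
        have "j \<noteq> 2" using no2 that by auto
        then show ?thesis
          using cand[OF that] overlap[OF True that] m unfolding arcs_overlap_def by auto
      qed
      then show ?thesis by blast
    next
      case no3: False
      have "j \<in> {0, 6, 7}" if "j \<in> J" for j
      proof -
        have "j \<noteq> 2" "j \<noteq> 3" using no2 no3 that by auto
        then show ?thesis using cand[OF that] m unfolding arcs_overlap_def by auto
      qed
      then show ?thesis by blast
    qed
  qed
  then show ?thesis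
    using card_mono[of "{0::nat, 2, 3}" J] card_mono[of "{0::nat, 3, 6}" J]
      card_mono[of "{0::nat, 6, 7}" J]
    by fastforce
qed

lemma num_arcs_in_le_3:
  assumes m: "9 \<le> m" and \<sigma>: "\<sigma> \<in> cyclic_orders Y m"
    and posA: "\<And>k. k < m \<Longrightarrow> \<sigma> k \<in> A \<Longrightarrow> k < 4"
    and posQ: "\<And>k. k < m \<Longrightarrow> \<sigma> k \<in> Q \<Longrightarrow> 5 \<le> k \<and> k \<le> 7"
    and inter: "\<And>G H. G \<in> F \<Longrightarrow> H \<in> F \<Longrightarrow> G \<inter> H \<noteq> {}"
    and AF: "A \<in> F" and FQ: "\<And>G. G \<in> F \<Longrightarrow> G \<noteq> A \<Longrightarrow> G \<inter> Q \<noteq> {}"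
  shows "num_arcs_in F m \<sigma> \<le> 3"
  unfolding num_arcs_in_def
proof (rule card_overlapping_positions_le_3[OF m])
  fix i assume "i \<in> {i \<in> {..<m}. \<sigma> ` arc m i \<in> F}"
  then have i: "i < m" and GF: "\<sigma> ` arc m i \<in> F" by auto
  have sub: "arc m i \<subseteq> {..<m}" using arc_subset m by simp
  obtain k where k: "k \<in> arc m i" "\<sigma> k \<in> A" using inter[OF GF AF] by blast
  then have "k \<in> arc m 0 \<inter> arc m i" using posA sub arc_0 m by auto
  then have overlap: "arcs_overlap m 0 i" using arc_inter_iff_overlap[of m 0 i] m i by auto
  show "i = 0 \<or> (arcs_overlap m 0 i \<and> 2 \<le> i \<and> i \<le> 7)"
  proof (cases "\<sigma> ` arc m i = A")
    case True
    then have all: "\<forall>k\<in>arc m i. k < 4" using posA sub by auto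
    have "i \<in> arc m i" unfolding mem_arc using i by (intro exI[of _ 0]) simp
    moreover have "(i + 3) mod m \<in> arc m i" unfolding mem_arc by (intro exI[of _ 3]) simp
    ultimately have "i < 4" "(i + 3) mod m < 4" using all by auto
    then show ?thesis using m by simp
  next
    case False
    then obtain k where k: "k \<in> arc m i" "\<sigma> k \<in> Q" using FQ[OF GF] by blast
    then have "5 \<le> k \<and> k \<le> 7" using posQ sub by auto
    moreover obtain r where "r < 4" "k = (i + r) mod m" using k unfolding mem_arc by blast
    ultimately have "2 \<le> i \<and> i \<le> 7"
      using mod_less_double[of "i + r" m] i m by (auto split: if_splits)
    then show ?thesis using overlap by simp
  qed
next
  fix i j assume "i \<in> {i \<in> {..<m}. \<sigma> ` arc m i \<in> F}" "j \<in> {i \<in> {..<m}. \<sigma> ` arc m i \<in> F}"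
  then show "arcs_overlap m i j"
    by (intro arcs_overlap_if_images_meet[OF \<sigma>]) (use m inter in auto)
qed

text \<open>The cyclic order \<open>A, r, Q, \<dots>\<close> carries at most three arcs of the family.\<close>
theorem intersecting_family_card_less:
  assumes fY: "finite Y" and cY: "card Y = m" and m: "9 \<le> m"
    and F: "F \<subseteq> {A. A \<subseteq> Y \<and> card A = 4}"
    and inter: "\<And>G H. G \<in> F \<Longrightarrow> H \<in> F \<Longrightarrow> G \<inter> H \<noteq> {}"
    and AF: "A \<in> F" and QY: "Q \<subseteq> Y" and QA: "Q \<inter> A = {}" and cQ: "card Q \<le> 3"
    and FQ: "\<And>G. G \<in> F \<Longrightarrow> G \<noteq> A \<Longrightarrow> G \<inter> Q \<noteq> {}"
  shows "card F * m < 4 * (m choose 4)"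
proof -
  have "A \<subseteq> Y" "card A = 4" using AF F by auto
  with ex_cyclic_order_blocks[OF fY cY _ _ _ QY QA cQ] m obtain \<sigma>
    where \<sigma>: "\<sigma> \<in> cyclic_orders Y m"
      and "\<And>k. k < m \<Longrightarrow> \<sigma> k \<in> A \<Longrightarrow> k < 4"
      and "\<And>k. k < m \<Longrightarrow> \<sigma> k \<in> Q \<Longrightarrow> 5 \<le> k \<and> k \<le> 7"
    by auto
  then have "num_arcs_in F m \<sigma> \<le> 3" using num_arcs_in_le_3[OF m] inter AF FQ by blast
  then show ?thesis
    using intersecting_family_card_less_of_cyclic_order[OF fY cY _ F inter \<sigma>] m by simp
qed


text \<open>Each \<open>x \<in> B\<close> spreads weight 1 evenly over its neighbours; by the degree condition each
  neighbour \<open>y\<close> receives \<open>1 / deg y\<close> from each of at most \<open>deg y\<close> elements of \<open>B\<close>.\<close>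
lemma card_le_card_neighbourhood:
  fixes R :: "'a \<Rightarrow> 'b \<Rightarrow> bool"
  assumes fL: "finite L" and fM: "finite M" and BL: "B \<subseteq> L"
    and deg: "\<And>x y. x \<in> L \<Longrightarrow> y \<in> M \<Longrightarrow> R x y \<Longrightarrow>
      card {y'\<in>M. R x y'} = card {x'\<in>L. R x' y}"
    and nonisolated: "\<And>x. x \<in> B \<Longrightarrow> \<exists>y\<in>M. R x y"
  shows "card B \<le> card {y\<in>M. \<exists>x\<in>B. R x y}"
proof -
  define NB where "NB = {y\<in>M. \<exists>x\<in>B. R x y}"
  define dL where "dL x = card {y'\<in>M. R x y'}" for x
  define dM where "dM y = card {x'\<in>L. R x' y}" for y
  have fB: "finite B" and fNB: "finite NB" using fL BL fM finite_subset NB_def by auto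
  have "real (card B) = (\<Sum>x\<in>B. 1)" by simp
  also have "\<dots> = (\<Sum>x\<in>B. \<Sum>y\<in>{y\<in>NB. R x y}. 1 / real (dL x))"
  proof (rule sum.cong[OF HOL.refl])
    fix x assume x: "x \<in> B"
    have "{y\<in>NB. R x y} = {y'\<in>M. R x y'}" using x unfolding NB_def by auto
    moreover have "0 < dL x" using nonisolated[OF x] fM unfolding dL_def by (auto simp: card_gt_0_iff)
    ultimately show "1 = (\<Sum>y\<in>{y\<in>NB. R x y}. 1 / real (dL x))" by (simp add: dL_def)
  qed
  also have "\<dots> = (\<Sum>y\<in>NB. \<Sum>x | x \<in> B \<and> R x y. 1 / real (dL x))"
    by (rule sum.swap_restrict[OF fB fNB])
  also have "\<dots> \<le> (\<Sum>y\<in>NB. 1)"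
  proof (rule sum_mono)
    fix y assume y: "y \<in> NB"
    have "dL x = dM y" if "x \<in> B" "R x y" for x
      using deg that y BL unfolding dL_def dM_def NB_def by auto
    then have "(\<Sum>x | x \<in> B \<and> R x y. 1 / real (dL x)) = real (card {x. x \<in> B \<and> R x y}) / real (dM y)"
      by simp
    also have "\<dots> \<le> 1"
    proof -
      have "card {x. x \<in> B \<and> R x y} \<le> dM y"
        unfolding dM_def by (rule card_mono) (use fL BL in auto)
      moreover have "0 < card {x. x \<in> B \<and> R x y}" using y fB unfolding NB_def by (auto simp: card_gt_0_iff)
      ultimately show ?thesis by simp
    qed
    finally show "(\<Sum>x | x \<in> B \<and> R x y. 1 / real (dL x)) \<le> 1" .
  qed
  finally show ?thesis unfolding NB_def by simp
qed

lemma card_subsets_split: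
  assumes "finite P1" and "finite P2" and "P1 \<inter> P2 = {}"
  shows "card {Z. Z \<subseteq> P1 \<union> P2 \<and> card (Z \<inter> P1) = a \<and> card (Z \<inter> P2) = b}
    = (card P1 choose a) * (card P2 choose b)"
proof -
  have split: "(Z1 \<union> Z2) \<inter> P1 = Z1" "(Z1 \<union> Z2) \<inter> P2 = Z2"
    if "Z1 \<subseteq> P1" "Z2 \<subseteq> P2" for Z1 Z2
    using that assms(3) by auto
  have "bij_betw (\<lambda>Z. (Z \<inter> P1, Z \<inter> P2))
      {Z. Z \<subseteq> P1 \<union> P2 \<and> card (Z \<inter> P1) = a \<and> card (Z \<inter> P2) = b}
      ({Z1. Z1 \<subseteq> P1 \<and> card Z1 = a} \<times> {Z2. Z2 \<subseteq> P2 \<and> card Z2 = b})"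
    by (rule bij_betw_byWitness[where f' = "\<lambda>(Z1, Z2). Z1 \<union> Z2"]) (auto simp: split)
  then show ?thesis
    using bij_betw_same_card n_subsets[OF assms(1)] n_subsets[OF assms(2)]
    by (fastforce simp: card_cartesian_product)
qed

text \<open>Such \<open>Z\<close> consist of \<open>i\<close> points of \<open>A - C\<close> and \<open>4 - i\<close> points outside \<open>A \<union> C \<union> X\<close>.\<close>
lemma card_swap_partners:
  assumes fU: "finite U" and AU: "A \<subseteq> U" and CU: "C \<subseteq> U" and XU: "X \<subseteq> U"
    and cX: "card X = 4" and XA: "X \<inter> A = {}" and i: "card (X \<inter> C) = i" and i1: "1 \<le> i"
  shows "card {Z. Z \<subseteq> U \<and> card Z = 4 \<and> Z \<inter> C = {} \<and> Z \<inter> A \<noteq> {} \<and> X \<inter> Z = {} \<and> card (Z \<inter> A) = i}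
    = (card (A - C) choose i) * ((card U - card (A \<union> C) - (4 - i)) choose (4 - i))"
proof -
  define W where "W = U - (A \<union> C \<union> X)"
  have fX: "finite X" and fA: "finite A" and fC: "finite C" and fW: "finite W"
    using fU AU CU XU finite_subset W_def by auto
  have dW: "(A - C) \<inter> W = {}" using W_def by auto
  have i4: "i \<le> 4" using i cX card_mono[OF fX, of "X \<inter> C"] by auto
  have split: "card Z = card (Z \<inter> (A - C)) + card (Z \<inter> W)" if "Z \<subseteq> (A - C) \<union> W" for Z
  proof -
    have "Z = (Z \<inter> (A - C)) \<union> (Z \<inter> W)" using that by auto
    moreover have "finite Z" using that fA fW finite_subset by blast
    ultimately show ?thesis using dW by (metis card_Un_disjoint finite_Int inf_assoc inf_bot_right inf_left_commute)
  qed
  have "{Z. Z \<subseteq> U \<and> card Z = 4 \<and> Z \<inter> C = {} \<and> Z \<inter> A \<noteq> {} \<and> X \<inter> Z = {} \<and> card (Z \<inter> A) = i}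
      = {Z. Z \<subseteq> (A - C) \<union> W \<and> card (Z \<inter> (A - C)) = i \<and> card (Z \<inter> W) = 4 - i}"
  proof (intro set_eqI iffI)
    fix Z assume "Z \<in> {Z. Z \<subseteq> U \<and> card Z = 4 \<and> Z \<inter> C = {} \<and> Z \<inter> A \<noteq> {} \<and> X \<inter> Z = {} \<and> card (Z \<inter> A) = i}"
    then have Z: "Z \<subseteq> U" "card Z = 4" "Z \<inter> C = {}" "X \<inter> Z = {}" "card (Z \<inter> A) = i" by auto
    then have "Z \<subseteq> (A - C) \<union> W" "Z \<inter> (A - C) = Z \<inter> A" using W_def by auto
    then show "Z \<in> {Z. Z \<subseteq> (A - C) \<union> W \<and> card (Z \<inter> (A - C)) = i \<and> card (Z \<inter> W) = 4 - i}"
      using split Z by fastforce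
  next
    fix Z assume "Z \<in> {Z. Z \<subseteq> (A - C) \<union> W \<and> card (Z \<inter> (A - C)) = i \<and> card (Z \<inter> W) = 4 - i}"
    then have Z: "Z \<subseteq> A - C \<union> W" "card (Z \<inter> (A - C)) = i" "card (Z \<inter> W) = 4 - i" by auto
    then have "card Z = 4" using split i4 by simp
    moreover have "Z \<inter> (A - C) = Z \<inter> A" using Z W_def by auto
    moreover have "Z \<inter> A \<noteq> {}" using calculation Z i1 by auto
    ultimately show "Z \<in> {Z. Z \<subseteq> U \<and> card Z = 4 \<and> Z \<inter> C = {} \<and> Z \<inter> A \<noteq> {} \<and> X \<inter> Z = {} \<and> card (Z \<inter> A) = i}"
      using Z AU W_def XA by auto
  qed
  moreover have "card W = card U - card (A \<union> C) - (4 - i)"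
  proof -
    have "A \<union> C \<union> X = (A \<union> C) \<union> (X - C)" using XA by auto
    moreover have "card ((A \<union> C) \<union> (X - C)) = card (A \<union> C) + card (X - C)"
      by (rule card_Un_disjoint) (use fA fC fX XA in auto)
    moreover have "card (X - C) = 4 - i"
      using card_Diff_subset_Int[of X C] fX cX i by (simp add: Int_commute)
    moreover have "card W = card U - card (A \<union> C \<union> X)" unfolding W_def
      using AU CU XU fU by (intro card_Diff_subset) (auto intro: finite_subset)
    ultimately show ?thesis by simp
  qed
  ultimately show ?thesis using card_subsets_split[OF _ fW dW] fA by simp
qed

lemma card_Diff_less_if_meets: "finite C \<Longrightarrow> C \<inter> A \<noteq> {} \<Longrightarrow> card (C - A) < card C"
  by (intro psubset_card_mono) auto

lemma quarter_minus_one_le_ratio_iff: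
  assumes "4 \<le> n" and "0 < c"
  shows "real n / 4 - 1 \<le> real s / real c \<longleftrightarrow> (n - 4) * c \<le> 4 * s"
proof -
  have "real n / 4 - 1 \<le> real s / real c \<longleftrightarrow> (real n - 4) * real c \<le> 4 * real s"
    using assms by (simp add: field_simps)
  also have "\<dots> \<longleftrightarrow> real ((n - 4) * c) \<le> real (4 * s)" using assms by (simp add: of_nat_diff)
  finally show ?thesis by (rule trans) (rule of_nat_le_iff)
qed

lemma ratio_eq_quarter_minus_one_iff:
  assumes "4 \<le> n" and "0 < c"
  shows "real s / real c = real n / 4 - 1 \<longleftrightarrow> (n - 4) * c = 4 * s"
proof -
  have "real s / real c = real n / 4 - 1 \<longleftrightarrow> (real n - 4) * real c = 4 * real s"
    using assms by (simp add: field_simps) linarith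
  also have "\<dots> \<longleftrightarrow> real ((n - 4) * c) = real (4 * s)" using assms by (simp add: of_nat_diff)
  finally show ?thesis by (rule trans) (rule of_nat_eq_iff)
qed


section \<open>Vertex cuts of the Kneser graph \<open>K(n,4)\<close>\<close>

lemma symp_kneser_adj: "symp kneser_adj"
  unfolding symp_def kneser_adj_def by blast

lemma finite_kneser_vertices: "finite (kneser_vertices n k)"
  unfolding kneser_vertices_def by (rule finite_subset[of _ "Pow {1..n}"]) auto

lemma card_kneser_vertices: "card (kneser_vertices n k) = n choose k"
  unfolding kneser_vertices_def using n_subsets[of "{1..n}" k] by simp

locale kneser4 =
  fixes n :: nat
  assumes n_ge_13: "13 \<le> n"
begin

abbreviation V :: "nat set set" where
  "V \<equiv> kneser_vertices n 4"

lemma mem_V: "X \<in> V \<longleftrightarrow> X \<subseteq> {1..n} \<and> card X = 4"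
  unfolding kneser_vertices_def by simp

lemma vertex_nonempty: "X \<in> V \<Longrightarrow> X \<noteq> {}"
  unfolding mem_V by auto

lemma finite_vertex: "X \<in> V \<Longrightarrow> finite X"
  using card_ge_0_finite mem_V by force

lemma card_complement_vertex:
  assumes "D \<in> V"
  shows "card ({1..n} - D) = n - 4"
  using assms card_Diff_subset[of D "{1..n}"] finite_subset[of D "{1..n}"] unfolding mem_V by auto

lemma independent_set_card_le:
  assumes "independent_set V kneser_adj J"
  shows "card J * n \<le> 4 * (n choose 4)"
proof (rule intersecting_family_card_le[of "{1..n}"])
  show "J \<subseteq> {A. A \<subseteq> {1..n} \<and> card A = 4}"
    using assms mem_V by (auto simp: independent_set_def)
  show "\<And>A B. A \<in> J \<Longrightarrow> B \<in> J \<Longrightarrow> A \<inter> B \<noteq> {}"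
    using assms by (auto simp: independent_set_def kneser_adj_def)
qed (use n_ge_13 in auto)

lemma card_vertices_disjoint:
  assumes "A \<in> V"
  shows "card {X\<in>V. X \<inter> A = {}} = (n - 4) choose 4"
proof -
  have "{X\<in>V. X \<inter> A = {}} = {X. X \<subseteq> {1..n} - A \<and> card X = 4}" unfolding mem_V by auto
  then show ?thesis using n_subsets[of "{1..n} - A" 4] card_complement_vertex[OF assms] by simp
qed

lemma card_swap_partners_in_V:
  assumes "A \<in> V" and "C \<in> V" and "X \<in> V" and "X \<inter> A = {}" and "X \<inter> C \<noteq> {}"
  shows "card {Z\<in>V. Z \<inter> C = {} \<and> Z \<inter> A \<noteq> {} \<and> X \<inter> Z = {} \<and> card (Z \<inter> A) = card (X \<inter> C)}
    = (card (A - C) choose card (X \<inter> C)) *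
      ((n - card (A \<union> C) - (4 - card (X \<inter> C))) choose (4 - card (X \<inter> C)))"
proof -
  have "1 \<le> card (X \<inter> C)" using assms(3,5) finite_vertex by (auto simp: Suc_leI card_gt_0_iff)
  moreover have "{Z\<in>V. Z \<inter> C = {} \<and> Z \<inter> A \<noteq> {} \<and> X \<inter> Z = {} \<and> card (Z \<inter> A) = card (X \<inter> C)}
    = {Z. Z \<subseteq> {1..n} \<and> card Z = 4 \<and> Z \<inter> C = {} \<and> Z \<inter> A \<noteq> {} \<and> X \<inter> Z = {}
        \<and> card (Z \<inter> A) = card (X \<inter> C)}"
    by (auto simp: mem_V)
  ultimately show ?thesis
    using card_swap_partners[of "{1..n}" A C X] assms mem_V by simp
qed

lemma card_Diff_sym:
  assumes "A \<in> V" and "C \<in> V"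
  shows "card (A - C) = card (C - A)"
  using card_Diff_subset_Int[of A C] card_Diff_subset_Int[of C A] assms finite_vertex mem_V
  by (simp add: Int_commute)

lemma ex_swap_partner:
  assumes A: "A \<in> V" and C: "C \<in> V" and AC: "A \<inter> C \<noteq> {}"
    and X: "X \<in> V" "X \<inter> A = {}" "X \<inter> C \<noteq> {}"
  obtains Z where "Z \<in> V" and "Z \<inter> C = {}" and "Z \<inter> A \<noteq> {}" and "X \<inter> Z = {}"
    and "card (Z \<inter> A) = card (X \<inter> C)"
proof -
  let ?i = "card (X \<inter> C)"
  have "1 \<le> ?i" "?i \<le> 4"
    using X C finite_vertex card_mono[of C "X \<inter> C"] mem_V by (auto simp: Suc_leI card_gt_0_iff)
  moreover have "card (A \<union> C) \<le> 7"
  proof -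
    have "1 \<le> card (A \<inter> C)" using AC finite_vertex[OF A] by (simp add: Suc_leI card_gt_0_iff)
    then show ?thesis using card_Un_Int[of A C] A C finite_vertex mem_V by simp
  qed
  moreover have "?i \<le> card (A - C)"
    using card_mono[of "C - A" "X \<inter> C"] X card_Diff_sym[OF A C] C finite_vertex by auto
  ultimately have "card {Z\<in>V. Z \<inter> C = {} \<and> Z \<inter> A \<noteq> {} \<and> X \<inter> Z = {} \<and> card (Z \<inter> A) = ?i} \<noteq> 0"
    using card_swap_partners_in_V[OF A C X] n_ge_13 by simp
  then have "{Z\<in>V. Z \<inter> C = {} \<and> Z \<inter> A \<noteq> {} \<and> X \<inter> Z = {} \<and> card (Z \<inter> A) = ?i} \<noteq> {}"
    by (metis card.empty)
  then show thesis using that by blast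
qed

text \<open>\<open>X\<close> (missing \<open>A\<close>, meeting \<open>C\<close>) is related to \<open>Z\<close> (missing \<open>C\<close>, meeting \<open>A\<close>) if they are
  disjoint and \<open>|X \<inter> C| = |Z \<inter> A|\<close>; related vertices have the same degree.\<close>
lemma card_le_card_swap_partners:
  assumes A: "A \<in> V" and C: "C \<in> V" and AC: "A \<inter> C \<noteq> {}"
    and Xs: "Xs \<subseteq> {X\<in>V. X \<inter> A = {} \<and> X \<inter> C \<noteq> {}}"
  shows "card Xs \<le> card {Z\<in>V. Z \<inter> C = {} \<and> Z \<inter> A \<noteq> {} \<and> (\<exists>X\<in>Xs. X \<inter> Z = {})}"
proof -
  define Aonly where "Aonly = {X\<in>V. X \<inter> A = {} \<and> X \<inter> C \<noteq> {}}"
  define Conly where "Conly = {Z\<in>V. Z \<inter> C = {} \<and> Z \<inter> A \<noteq> {}}"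
  define R where "R X Z \<longleftrightarrow> X \<inter> Z = {} \<and> card (X \<inter> C) = card (Z \<inter> A)" for X Z :: "nat set"
  have fin: "finite Aonly" "finite Conly"
    unfolding Aonly_def Conly_def using finite_kneser_vertices by auto
  let ?deg = "\<lambda>i. (card (A - C) choose i) * ((n - card (A \<union> C) - (4 - i)) choose (4 - i))"
  have deg: "card {Z\<in>Conly. R X Z} = ?deg (card (X \<inter> C))" if "X \<in> Aonly" for X
  proof -
    have "{Z\<in>Conly. R X Z}
      = {Z\<in>V. Z \<inter> C = {} \<and> Z \<inter> A \<noteq> {} \<and> X \<inter> Z = {} \<and> card (Z \<inter> A) = card (X \<inter> C)}"
      unfolding Conly_def R_def by auto
    then show ?thesis using card_swap_partners_in_V[OF A C] that unfolding Aonly_def by simp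
  qed
  have deg': "card {X\<in>Aonly. R X Z} = ?deg (card (Z \<inter> A))" if "Z \<in> Conly" for Z
  proof -
    have "{X\<in>Aonly. R X Z}
      = {X\<in>V. X \<inter> A = {} \<and> X \<inter> C \<noteq> {} \<and> Z \<inter> X = {} \<and> card (X \<inter> C) = card (Z \<inter> A)}"
      unfolding Aonly_def R_def by auto
    then show ?thesis
      using card_swap_partners_in_V[OF C A] that card_Diff_sym[OF A C] unfolding Conly_def
      by (simp add: Un_commute)
  qed
  have "card Xs \<le> card {Z\<in>Conly. \<exists>X\<in>Xs. R X Z}"
  proof (rule card_le_card_neighbourhood[OF fin])
    show "Xs \<subseteq> Aonly" using Xs Aonly_def by simp
  next
    fix X Z assume XZ: "X \<in> Aonly" "Z \<in> Conly" "R X Z"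
    then have "card (X \<inter> C) = card (Z \<inter> A)" unfolding R_def by simp
    then show "card {Z'\<in>Conly. R X Z'} = card {X'\<in>Aonly. R X' Z}"
      unfolding deg[OF XZ(1)] deg'[OF XZ(2)] by simp
  next
    fix X assume "X \<in> Xs"
    then have "X \<in> V" "X \<inter> A = {}" "X \<inter> C \<noteq> {}" using Xs by auto
    then obtain Z where "Z \<in> V" "Z \<inter> C = {}" "Z \<inter> A \<noteq> {}" "X \<inter> Z = {}"
      "card (Z \<inter> A) = card (X \<inter> C)"
      by (rule ex_swap_partner[OF A C AC])
    then show "\<exists>Z\<in>Conly. R X Z" unfolding Conly_def R_def by auto
  qed
  also have "\<dots> \<le> card {Z\<in>V. Z \<inter> C = {} \<and> Z \<inter> A \<noteq> {} \<and> (\<exists>X\<in>Xs. X \<inter> Z = {})}"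
    by (rule card_mono) (auto simp: finite_kneser_vertices Conly_def R_def)
  finally show ?thesis .
qed

lemma card_boundary_ge:
  assumes S: "S \<subseteq> V"
    and K: "K \<in> components_in (V - S) kneser_adj" and K': "K' \<in> components_in (V - S) kneser_adj"
    and KK': "K \<noteq> K'"
  shows "(n - 4) choose 4 \<le> card {D\<in>S. \<exists>X\<in>K. kneser_adj X D}"
proof -
  obtain A C where A: "A \<in> K" and C: "C \<in> K'" using components_in_nonempty K K' by blast
  have AV: "A \<in> V" and CV: "C \<in> V" using A C K K' components_in_subset by blast+
  have AC: "A \<inter> C \<noteq> {}"
    using components_in_no_edge[OF symp_kneser_adj K K' A C KK'] unfolding kneser_adj_def .
  have in_S: "Z \<in> S" if "Z \<in> V" "X \<in> K" "kneser_adj X Z" "Z \<inter> C = {}" for X Z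
    using common_neighbour_notin_components[OF symp_kneser_adj K K' KK' that(2) C that(3)] that
    unfolding kneser_adj_def by auto
  define P where "P = {X\<in>V. X \<inter> A = {} \<and> X \<inter> C = {}}"
  define Aonly where "Aonly = {X\<in>V. X \<inter> A = {} \<and> X \<inter> C \<noteq> {}}"
  define Xs where "Xs = Aonly - S"
  define NB where "NB = {Z\<in>V. Z \<inter> C = {} \<and> Z \<inter> A \<noteq> {} \<and> (\<exists>X\<in>Xs. X \<inter> Z = {})}"
  have fin: "finite P" "finite Aonly" "finite NB"
    unfolding P_def Aonly_def NB_def using finite_kneser_vertices by auto
  have "Xs \<subseteq> K"
    using components_in_edge_closed[OF symp_kneser_adj K A] unfolding Xs_def Aonly_def kneser_adj_def
    by blast
  have "P \<union> (Aonly \<inter> S) \<union> NB \<subseteq> {D\<in>S. \<exists>X\<in>K. kneser_adj X D}"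
  proof -
    have "P \<subseteq> {D\<in>S. \<exists>X\<in>K. kneser_adj X D}"
      using in_S[of _ A] A unfolding P_def kneser_adj_def by blast
    moreover have "Aonly \<inter> S \<subseteq> {D\<in>S. \<exists>X\<in>K. kneser_adj X D}"
      using A unfolding Aonly_def kneser_adj_def by blast
    moreover have "NB \<subseteq> {D\<in>S. \<exists>X\<in>K. kneser_adj X D}"
      using in_S \<open>Xs \<subseteq> K\<close> unfolding NB_def kneser_adj_def by blast
    ultimately show ?thesis by blast
  qed
  moreover have "P \<inter> (Aonly \<inter> S) = {}" "(P \<union> (Aonly \<inter> S)) \<inter> NB = {}"
    unfolding P_def Aonly_def NB_def by auto
  ultimately have "card P + card (Aonly \<inter> S) + card NB \<le> card {D\<in>S. \<exists>X\<in>K. kneser_adj X D}"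
    using fin finite_subset[OF S finite_kneser_vertices] card_mono[of _ "P \<union> (Aonly \<inter> S) \<union> NB"]
    by (simp add: card_Un_disjoint)
  moreover have "card Xs \<le> card NB"
    unfolding NB_def by (rule card_le_card_swap_partners[OF AV CV AC]) (auto simp: Xs_def Aonly_def)
  moreover have "card Aonly = card (Aonly \<inter> S) + card Xs"
    using card_Int_Diff[OF fin(2), of S] Xs_def by simp
  moreover have "card P + card Aonly = (n - 4) choose 4"
  proof -
    have "P \<union> Aonly = {X\<in>V. X \<inter> A = {}}" "P \<inter> Aonly = {}" unfolding P_def Aonly_def by auto
    then show ?thesis using card_Un_disjoint[OF fin(1,2)] card_vertices_disjoint[OF AV] by simp
  qed
  ultimately show ?thesis by linarith
qed

lemma representatives_intersecting_family:
  assumes KD: "KD \<subseteq> components_in (V - S) kneser_adj"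
    and rep: "\<And>K. K \<in> KD \<Longrightarrow> rep K \<in> K \<and> kneser_adj (rep K) D"
  shows "card (rep ` KD) = card KD"
    and "rep ` KD \<subseteq> {A. A \<subseteq> {1..n} - D \<and> card A = 4}"
    and "\<And>G H. G \<in> rep ` KD \<Longrightarrow> H \<in> rep ` KD \<Longrightarrow> G \<inter> H \<noteq> {}"
proof -
  have comp: "K \<in> components_in (V - S) kneser_adj" "K \<subseteq> V" if "K \<in> KD" for K
    using that KD components_in_subset by blast+
  have "inj_on rep KD"
    using components_in_disjoint[OF symp_kneser_adj] comp rep by (metis inj_onI)
  then show "card (rep ` KD) = card KD" by (simp add: card_image)
  show "rep ` KD \<subseteq> {A. A \<subseteq> {1..n} - D \<and> card A = 4}"
  proof
    fix G assume "G \<in> rep ` KD"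
    then obtain K where K: "K \<in> KD" "G = rep K" by blast
    then have "G \<in> V" "G \<inter> D = {}" using rep[OF K(1)] comp(2)[OF K(1)] unfolding kneser_adj_def by auto
    then show "G \<in> {A. A \<subseteq> {1..n} - D \<and> card A = 4}" unfolding mem_V by auto
  qed
  fix G H assume "G \<in> rep ` KD" "H \<in> rep ` KD"
  then obtain K1 K2 where K: "K1 \<in> KD" "K2 \<in> KD" and GH: "G = rep K1" "H = rep K2" by blast
  show "G \<inter> H \<noteq> {}"
  proof (cases "K1 = K2")
    case True
    then show ?thesis using GH rep[OF K(1)] comp[OF K(1)] vertex_nonempty by auto
  next
    case False
    then show ?thesis
      using components_in_no_edge[OF symp_kneser_adj comp(1)[OF K(1)] comp(1)[OF K(2)]]
        rep K GH unfolding kneser_adj_def by blast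
  qed
qed

lemma card_components_adjacent_to_le:
  assumes "D \<in> V"
  shows "card (components_adjacent_to (V - S) kneser_adj D) * (n - 4) \<le> 4 * ((n - 4) choose 4)"
proof -
  let ?KD = "components_adjacent_to (V - S) kneser_adj D"
  define rep where "rep K = (SOME X. X \<in> K \<and> kneser_adj X D)" for K
  have rep: "rep K \<in> K \<and> kneser_adj (rep K) D" if "K \<in> ?KD" for K
    using that someI_ex[of "\<lambda>X. X \<in> K \<and> kneser_adj X D"]
    unfolding components_adjacent_to_def rep_def by blast
  have KD: "?KD \<subseteq> components_in (V - S) kneser_adj" unfolding components_adjacent_to_def by blast
  note R = representatives_intersecting_family[OF KD rep]
  have "card (rep ` ?KD) * (n - 4) \<le> 4 * ((n - 4) choose 4)"
    by (rule intersecting_family_card_le[OF _ card_complement_vertex[OF assms] _ R(2,3)])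
      (use n_ge_13 in auto)
  then show ?thesis using R(1) by simp
qed

lemma card_Int_le_3:
  assumes "A \<in> V" and "C \<in> V" and "A \<inter> X = {}" and "A \<inter> C \<noteq> {}"
  shows "card (X \<inter> C) \<le> 3"
proof -
  have "card (C - A) < 4" using card_Diff_less_if_meets[of C A] assms finite_vertex mem_V by auto
  then show ?thesis using card_mono[of "C - A" "X \<inter> C"] assms finite_vertex by fastforce
qed

lemma ex_vertex_avoiding:
  assumes A: "A \<in> V" and X: "X \<in> V" and C: "C \<in> V"
    and AX: "A \<inter> X = {}" and AC: "A \<inter> C \<noteq> {}" and XC: "X \<inter> C \<noteq> {}"
  obtains D where "D \<in> V" and "D \<inter> A = {}" and "D \<inter> C = {}" and "X \<inter> D = X - C"
proof -
  have AU: "A \<subseteq> {1..n}" "card A = 4" and XU: "X \<subseteq> {1..n}" "card X = 4"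
    and CU: "C \<subseteq> {1..n}" "card C = 4" using A X C mem_V by auto
  have fin: "finite A" "finite X" "finite C" using A X C finite_vertex by auto
  have CA: "card (C - A) < 4" using card_Diff_less_if_meets[of C A] fin CU AC by auto
  have Q: "card (X \<inter> C) \<le> 3" using card_Int_le_3[OF A C AX AC] .
  have "card (A \<union> X \<union> C) \<le> 10"
  proof -
    have "card (C - A - X) < card (C - A)"
      using card_Diff_less_if_meets[of "C - A" X] fin XC AX by auto
    moreover have "A \<union> X \<union> C = (A \<union> X) \<union> (C - A - X)" by auto
    ultimately show ?thesis
      using card_Un_le[of "A \<union> X" "C - A - X"] card_Un_disjoint[of A X] fin AX AU XU CA by simp
  qed
  then have "card (X \<inter> C) \<le> card ({1..n} - (A \<union> X \<union> C))"
    using card_Diff_subset[of "A \<union> X \<union> C" "{1..n}"] AU XU CU fin Q n_ge_13 by simp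
  then obtain R where R: "R \<subseteq> {1..n} - (A \<union> X \<union> C)" "card R = card (X \<inter> C)" "finite R"
    by (rule obtain_subset_with_card_n)
  show thesis
  proof
    have "card ((X - C) \<union> R) = card (X - C) + card R"
      using R fin by (intro card_Un_disjoint) auto
    moreover have "card (X - C) + card (X \<inter> C) = 4"
      using card_Diff_subset_Int[of X C] card_mono[of X "X \<inter> C"] fin XU by simp
    ultimately show "(X - C) \<union> R \<in> V" using R XU unfolding mem_V by auto
  qed (use R AX in auto)
qed

text \<open>An edge \<open>A X\<close> inside a component \<open>K\<close> yields a vertex \<open>D \<in> S\<close>, disjoint from \<open>A\<close>, from a vertex
  \<open>C\<close> of another component and from \<open>X - C\<close>. Representatives of the other components adjacent to \<open>D\<close>
  are not adjacent to \<open>X\<close>, so they all meet the set \<open>X \<inter> C\<close> of at most three points, and Katona's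
  bound becomes strict.\<close>
lemma card_components_adjacent_to_less:
  assumes S: "S \<subseteq> V"
    and K: "K \<in> components_in (V - S) kneser_adj" and K': "K' \<in> components_in (V - S) kneser_adj"
    and KK': "K \<noteq> K'" and A: "A \<in> K" and X: "X \<in> K" and AX: "kneser_adj A X"
  obtains D where "D \<in> S"
    and "card (components_adjacent_to (V - S) kneser_adj D) * (n - 4) < 4 * ((n - 4) choose 4)"
proof -
  obtain C where C: "C \<in> K'" using components_in_nonempty K' by blast
  have V: "A \<in> V" "X \<in> V" "C \<in> V" using A X C K K' components_in_subset by blast+
  have AC: "A \<inter> C \<noteq> {}" and XC: "X \<inter> C \<noteq> {}"
    using components_in_no_edge[OF symp_kneser_adj K K' _ C KK'] A X unfolding kneser_adj_def by auto
  obtain D where D: "D \<in> V" "D \<inter> A = {}" "D \<inter> C = {}" "X \<inter> D = X - C"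
    using ex_vertex_avoiding[OF V AX[unfolded kneser_adj_def] AC XC] by blast
  have "D \<in> S"
    using common_neighbour_notin_components[OF symp_kneser_adj K K' KK' A C] D(1-3)
    unfolding kneser_adj_def by blast
  let ?KD = "components_adjacent_to (V - S) kneser_adj D"
  define rep where
    "rep K'' = (if K'' = K then A else (SOME Z. Z \<in> K'' \<and> kneser_adj Z D))" for K''
  have rep: "rep K'' \<in> K'' \<and> kneser_adj (rep K'') D" if "K'' \<in> ?KD" for K''
    using that A D(2) someI_ex[of "\<lambda>Z. Z \<in> K'' \<and> kneser_adj Z D"]
    unfolding components_adjacent_to_def rep_def kneser_adj_def by auto
  have KD: "?KD \<subseteq> components_in (V - S) kneser_adj" unfolding components_adjacent_to_def by blast
  note R = representatives_intersecting_family[OF KD rep]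
  have "K \<in> ?KD" using K A D(2) unfolding components_adjacent_to_def kneser_adj_def by auto
  then have AF: "A \<in> rep ` ?KD" unfolding rep_def by force
  have meets: "G \<inter> (X \<inter> C) \<noteq> {}" if G: "G \<in> rep ` ?KD" and GA: "G \<noteq> A" for G
  proof -
    obtain K'' where K'': "K'' \<in> ?KD" "G = rep K''" using G by blast
    then have "K'' \<noteq> K" using GA rep_def by auto
    then have "G \<inter> X \<noteq> {}"
      using components_in_no_edge[OF symp_kneser_adj _ K _ X] KD K'' rep unfolding kneser_adj_def by blast
    moreover have "G \<inter> D = {}" using rep K'' unfolding kneser_adj_def by auto
    ultimately show ?thesis using D(4) by blast
  qed
  have "card (rep ` ?KD) * (n - 4) < 4 * ((n - 4) choose 4)"
  proof (rule intersecting_family_card_less[OF _ card_complement_vertex[OF D(1)] _ R(2,3) AF])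
    show "X \<inter> C \<subseteq> {1..n} - D" using V(2) D(3) mem_V by auto
    show "X \<inter> C \<inter> A = {}" using AX unfolding kneser_adj_def by auto
    show "card (X \<inter> C) \<le> 3"
      using card_Int_le_3[OF V(1,3) _ AC] AX unfolding kneser_adj_def by blast
  qed (use n_ge_13 meets in auto)
  then show thesis using that \<open>D \<in> S\<close> R(1) by simp
qed

lemma num_components_mul_le_sum:
  assumes S: "S \<subseteq> V" and two: "2 \<le> num_components (V - S) kneser_adj"
  shows "num_components (V - S) kneser_adj * ((n - 4) choose 4)
    \<le> (\<Sum>D\<in>S. card (components_adjacent_to (V - S) kneser_adj D))"
proof -
  let ?KK = "components_in (V - S) kneser_adj"
  have fin: "finite S" "finite (V - S)"
    using finite_subset[OF S finite_kneser_vertices] finite_kneser_vertices by auto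
  have "(n - 4) choose 4 \<le> card {D\<in>S. \<exists>X\<in>K. kneser_adj X D}" if K: "K \<in> ?KK" for K
  proof -
    obtain K' where "K' \<in> ?KK" "K' \<noteq> K" using obtain_other_component[OF two K] .
    then show ?thesis using card_boundary_ge[OF S K] by blast
  qed
  then have "(\<Sum>K\<in>?KK. (n - 4) choose 4) \<le> (\<Sum>K\<in>?KK. card {D\<in>S. \<exists>X\<in>K. kneser_adj X D})"
    by (rule sum_mono)
  then show ?thesis
    unfolding num_components_def sum_card_components_adjacent_to[OF fin] by simp
qed

lemma num_components_cut_le:
  assumes cut: "vertex_cut V kneser_adj S"
  shows "(n - 4) * num_components (V - S) kneser_adj \<le> 4 * card S"
proof -
  let ?c = "num_components (V - S) kneser_adj" and ?d = "(n - 4) choose 4"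
  have S: "S \<subseteq> V" and two: "2 \<le> ?c" using cut unfolding vertex_cut_def by auto
  have "?c * ?d * (n - 4) \<le> (\<Sum>D\<in>S. card (components_adjacent_to (V - S) kneser_adj D)) * (n - 4)"
    using num_components_mul_le_sum[OF S two] by simp
  also have "\<dots> = (\<Sum>D\<in>S. card (components_adjacent_to (V - S) kneser_adj D) * (n - 4))"
    by (rule sum_distrib_right)
  also have "\<dots> \<le> (\<Sum>D\<in>S. 4 * ?d)"
    using card_components_adjacent_to_le S by (intro sum_mono) auto
  also have "\<dots> = 4 * card S * ?d" by simp
  finally have "(n - 4) * ?c * ?d \<le> 4 * card S * ?d" by (simp add: algebra_simps)
  moreover have "0 < ?d" using n_ge_13 by simp
  ultimately show ?thesis by simp
qed

lemma independent_complement_if_cut_eq: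
  assumes cut: "vertex_cut V kneser_adj S"
    and eq: "(n - 4) * num_components (V - S) kneser_adj = 4 * card S"
  shows "independent_set V kneser_adj (V - S)"
proof -
  let ?KK = "components_in (V - S) kneser_adj" and ?c = "num_components (V - S) kneser_adj"
    and ?d = "(n - 4) choose 4" and ?\<tau> = "\<lambda>D. card (components_adjacent_to (V - S) kneser_adj D)"
  have S: "S \<subseteq> V" and two: "2 \<le> ?c" using cut unfolding vertex_cut_def by auto
  have fin: "finite S" "finite (V - S)"
    using finite_subset[OF S finite_kneser_vertices] finite_kneser_vertices by auto
  have "\<not> kneser_adj A X" if A: "A \<in> V - S" and X: "X \<in> V - S" for A X
  proof
    assume AX: "kneser_adj A X"
    define K where "K = component_of (V - S) kneser_adj A"
    have K: "K \<in> ?KK" "A \<in> K" "X \<in> K"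
      using component_of_in_components_in[OF A] in_component_of_self[OF A]
        components_in_edge_closed[OF symp_kneser_adj _ _ X AX] unfolding K_def by auto
    obtain K' where K': "K' \<in> ?KK" "K' \<noteq> K" using obtain_other_component[OF two K(1)] .
    obtain D where D: "D \<in> S" "?\<tau> D * (n - 4) < 4 * ?d"
      using card_components_adjacent_to_less[OF S K(1) K'(1) K'(2)[symmetric] K(2,3) AX] by blast
    have "?c * ?d * (n - 4) \<le> (\<Sum>D\<in>S. ?\<tau> D * (n - 4))"
      using num_components_mul_le_sum[OF S two] by (simp add: sum_distrib_right[symmetric])
    also have "\<dots> < (\<Sum>D\<in>S. 4 * ?d)"
      using card_components_adjacent_to_le S D fin(1) by (intro sum_strict_mono_ex1) auto
    also have "\<dots> = (4 * card S) * ?d" by (simp add: ac_simps)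
    also have "\<dots> = ?c * ?d * (n - 4)" unfolding eq[symmetric] by (simp add: ac_simps)
    finally show False by simp
  qed
  then show ?thesis unfolding independent_set_def by auto
qed

lemma max_independent_complement_if_cut_eq:
  assumes cut: "vertex_cut V kneser_adj S"
    and eq: "(n - 4) * num_components (V - S) kneser_adj = 4 * card S"
  shows "max_independent_set V kneser_adj (V - S)"
proof -
  have S: "S \<subseteq> V" using cut unfolding vertex_cut_def by simp
  have ind: "independent_set V kneser_adj (V - S)" by (rule independent_complement_if_cut_eq[OF cut eq])
  then have "num_components (V - S) kneser_adj = card (V - S)"
    by (intro num_components_edgeless) (auto simp: independent_set_def)
  moreover have "card V = card S + card (V - S)"
    using S finite_kneser_vertices by (simp add: card_Diff_subset card_mono finite_subset)
  moreover have "(n - 4) * card (V - S) + 4 * card (V - S) = n * card (V - S)"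
    using n_ge_13 by (simp add: add_mult_distrib[symmetric])
  ultimately have "card (V - S) * n = 4 * (n choose 4)"
    using eq card_kneser_vertices[of n 4] by (simp add: algebra_simps)
  then have "card J * n \<le> card (V - S) * n" if "independent_set V kneser_adj J" for J
    using independent_set_card_le[OF that] by simp
  then have "card J \<le> card (V - S)" if "independent_set V kneser_adj J" for J
    using that n_ge_13 by simp
  then show ?thesis using ind unfolding max_independent_set_def by blast
qed

lemma quarter_minus_one_le_cut_ratio:
  assumes "vertex_cut V kneser_adj S"
  shows "real n / 4 - 1 \<le> real (card S) / real (num_components (V - S) kneser_adj)"
  using num_components_cut_le[OF assms] assms n_ge_13
  by (subst quarter_minus_one_le_ratio_iff) (auto simp: vertex_cut_def)

lemma card_star_complement: "card (V - {X\<in>V. 1 \<in> X}) = (n - 1) choose 4"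
proof -
  have "V - {X\<in>V. 1 \<in> X} = {X. X \<subseteq> {2..n} \<and> card X = 4}"
  proof (intro set_eqI iffI)
    fix X assume "X \<in> V - {X\<in>V. 1 \<in> X}"
    then have X: "X \<subseteq> {1..n}" "1 \<notin> X" "card X = 4" by (auto simp: mem_V)
    have "x \<in> {2..n}" if "x \<in> X" for x
      using that X(1,2) by (cases "x = 1") (auto simp: subset_iff)
    then show "X \<in> {X. X \<subseteq> {2..n} \<and> card X = 4}" using X(3) by auto
  next
    fix X assume "X \<in> {X. X \<subseteq> {2..n} \<and> card X = 4}"
    then show "X \<in> V - {X\<in>V. 1 \<in> X}" by (auto simp: mem_V)
  qed
  then show ?thesis using n_subsets[of "{2..n}" 4] by simp
qed

lemma card_star: "card {X\<in>V. 1 \<in> X} = (n - 1) choose 3"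
proof -
  have "card {X\<in>V. 1 \<in> X} + card (V - {X\<in>V. 1 \<in> X}) = n choose 4"
    using card_Diff_subset[of "{X\<in>V. 1 \<in> X}" V] card_mono[of V "{X\<in>V. 1 \<in> X}"]
      finite_kneser_vertices card_kneser_vertices[of n 4]
    by (simp add: finite_subset)
  then show ?thesis using card_star_complement choose_reduce_nat[of n 4] n_ge_13 by simp
qed

lemma star_cut:
  defines "I \<equiv> {X\<in>V. 1 \<in> X}"
  shows "vertex_cut V kneser_adj (V - I)"
    and "real (card (V - I)) / real (num_components (V - (V - I)) kneser_adj) = real n / 4 - 1"
proof -
  have VI: "V - (V - I) = I" unfolding I_def by auto
  have comps: "num_components I kneser_adj = card I"
    by (rule num_components_edgeless) (auto simp: I_def kneser_adj_def)
  have "(n - 4) * ((n - 1) choose 3) = 4 * ((n - 1) choose 4)"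
    using binomial_absorb_comp[of "n - 1" 3] binomial_absorption[of 3 "n - 1"] by simp
  moreover have cI: "card I = (n - 1) choose 3" unfolding I_def by (rule card_star)
  moreover have "card (V - I) = (n - 1) choose 4" unfolding I_def by (rule card_star_complement)
  ultimately have eq: "(n - 4) * num_components (V - (V - I)) kneser_adj = 4 * card (V - I)"
    unfolding VI comps by simp
  have "0 < (n - 2) choose 2" using n_ge_13 by simp
  then have "(n - 1) * 1 \<le> (n - 1) * ((n - 2) choose 2)" by (intro mult_le_mono2) linarith
  moreover have "3 * ((n - 1) choose 3) = (n - 1) * ((n - 2) choose 2)"
    using binomial_absorption[of 2 "n - 1"] by (simp add: numeral_eq_Suc)
  ultimately have "2 \<le> card I" using cI n_ge_13 by linarith
  then show cut: "vertex_cut V kneser_adj (V - I)" unfolding vertex_cut_def VI comps by simp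
  show "real (card (V - I)) / real (num_components (V - (V - I)) kneser_adj) = real n / 4 - 1"
    using eq cut n_ge_13 ratio_eq_quarter_minus_one_iff unfolding vertex_cut_def by simp
qed

lemma optimal_cut_complement_max_independent:
  assumes cut: "vertex_cut V kneser_adj S"
    and ratio: "real (card S) / real (num_components (V - S) kneser_adj) = real n / 4 - 1"
  shows "\<exists>I. max_independent_set V kneser_adj I \<and> S = V - I"
proof -
  have "(n - 4) * num_components (V - S) kneser_adj = 4 * card S"
    using ratio cut n_ge_13 ratio_eq_quarter_minus_one_iff unfolding vertex_cut_def by simp
  then have "max_independent_set V kneser_adj (V - S)"
    by (rule max_independent_complement_if_cut_eq[OF cut])
  moreover have "S = V - (V - S)" using cut unfolding vertex_cut_def by auto
  ultimately show ?thesis by blast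
qed

end

theorem theorem5p1:
  fixes n :: nat
  assumes "n \<ge> 13"
  shows "toughness (kneser_vertices n 4) kneser_adj = real n / 4 - 1 \<and>
         (\<forall>S. vertex_cut (kneser_vertices n 4) kneser_adj S \<and>
              real (card S) / real (num_components (kneser_vertices n 4 - S) kneser_adj)
                = real n / 4 - 1 \<longrightarrow>
              (\<exists>I. max_independent_set (kneser_vertices n 4) kneser_adj I \<and>
                   S = kneser_vertices n 4 - I))"
proof -
  interpret kneser4 n using assms by unfold_locales
  have "toughness V kneser_adj = real n / 4 - 1"
    by (rule toughness_eqI[OF quarter_minus_one_le_cut_ratio star_cut])
  then show ?thesis using optimal_cut_complement_max_independent by blast
qed

end
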